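(* Let $(\Sigma_+,\Sigma_-,N_1,N_2,N_3)$ be a solution of the Wainwright–Hsu system satisfying the constraint, with $N_1<0$, $N_2=N_3>0$ and $\Sigma_-=0$. Then $\lim_{\tau\to\infty}\Sigma_+=\frac12$, $\lim_{\tau\to\infty}N_1=0$, $\lim_{\tau\to\infty}N_2=\infty$ and $\lim_{\tau\to\infty}N_1N_2=-\frac14$.
   Context: Wainwright–Hsu system: for functions $N_1,N_2,N_3,\Sigma_+,\Sigma_-$ of $\tau\in\mathbb{R}$ (prime denotes $d/d\tau$), $N_1'=(q-4\Sigma_+)N_1$, $N_2'=(q+2\Sigma_++2\sqrt3\Sigma_-)N_2$, $N_3'=(q+2\Sigma_+-2\sqrt3\Sigma_-)N_3$, $\Sigma_+'=-(2-q)\Sigma_+-3S_+$, $\Sigma_-'=-(2-q)\Sigma_--3S_-$, where $q=2(\Sigma_+^2+\Sigma_-^2)$, $S_+=\frac12[(N_2-N_3)^2-N_1(2N_1-N_2-N_3)]$, $S_-=\frac{\sqrt3}{2}(N_3-N_2)(N_1-N_2-N_3)$, together with the constraint $\Sigma_+^2+\Sigma_-^2+\frac34[N_1^2+N_2^2+N_3^2-2(N_1N_2+N_2N_3+N_1N_3)]=1$. The set $\{N_2=N_3,\ \Sigma_-=0\}$ is invariant under the flow. *)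

theory Defs
  imports "HOL-Analysis.Analysis"
begin

definition wh_q :: "real \<Rightarrow> real \<Rightarrow> real" where
  "wh_q sp sm = 2 * (sp^2 + sm^2)"

definition wh_Sp :: "real \<Rightarrow> real \<Rightarrow> real \<Rightarrow> real" where
  "wh_Sp n1 n2 n3 = (1/2) * ((n2 - n3)^2 - n1 * (2*n1 - n2 - n3))"

definition wh_Sm :: "real \<Rightarrow> real \<Rightarrow> real \<Rightarrow> real" where
  "wh_Sm n1 n2 n3 = (sqrt 3 / 2) * (n3 - n2) * (n1 - n2 - n3)"

definition WH_solution ::
  "(real \<Rightarrow> real) \<Rightarrow> (real \<Rightarrow> real) \<Rightarrow> (real \<Rightarrow> real) \<Rightarrow> (real \<Rightarrow> real) \<Rightarrow> (real \<Rightarrow> real) \<Rightarrow> bool"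
where
  "WH_solution N1 N2 N3 Sp Sm \<longleftrightarrow>
    (\<forall>t. (N1 has_real_derivative ((wh_q (Sp t) (Sm t) - 4 * Sp t) * N1 t)) (at t)
       \<and> (N2 has_real_derivative ((wh_q (Sp t) (Sm t) + 2 * Sp t + 2 * sqrt 3 * Sm t) * N2 t)) (at t)
       \<and> (N3 has_real_derivative ((wh_q (Sp t) (Sm t) + 2 * Sp t - 2 * sqrt 3 * Sm t) * N3 t)) (at t)
       \<and> (Sp has_real_derivative (- (2 - wh_q (Sp t) (Sm t)) * Sp t - 3 * wh_Sp (N1 t) (N2 t) (N3 t))) (at t)
       \<and> (Sm has_real_derivative (- (2 - wh_q (Sp t) (Sm t)) * Sm t - 3 * wh_Sm (N1 t) (N2 t) (N3 t))) (at t)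
       \<and> (Sp t)^2 + (Sm t)^2 + (3/4) * ((N1 t)^2 + (N2 t)^2 + (N3 t)^2
            - 2 * (N1 t * N2 t + N2 t * N3 t + N1 t * N3 t)) = 1)"

end

theory Submission
  imports Defs
begin

text \<open>With \<open>N\<^sub>2 = N\<^sub>3\<close> and \<open>\<Sigma>\<^sub>- = 0\<close> the constraint reads
  \<open>\<Sigma>\<^sub>+\<^sup>2 + 3/4 N\<^sub>1\<^sup>2 - 3 N\<^sub>1 N\<^sub>2 = 1\<close>, so \<open>|\<Sigma>\<^sub>+| < 1\<close> and
  \<open>\<Sigma>\<^sub>+' = (1 - \<Sigma>\<^sub>+\<^sup>2)(1 - 2\<Sigma>\<^sub>+) + 9/4 N\<^sub>1\<^sup>2\<close>.
  Hence \<open>\<Sigma>\<^sub>+\<close> increases while it is at most \<open>1/2\<close>, and once above \<open>1/2\<close> it stays there.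
  In the first case \<open>1 - 2\<Sigma>\<^sub>+\<close>, in the second \<open>2\<Sigma>\<^sub>+ - 1\<close> satisfies a decay inequality
  \<open>f' \<le> -k f + r\<close> with \<open>r \<longrightarrow> 0\<close>; in the second case this uses that \<open>N\<^sub>1\<close> decays
  exponentially and that \<open>N\<^sub>1 N\<^sub>2\<close> is nonincreasing. So \<open>\<Sigma>\<^sub>+ \<longrightarrow> 1/2\<close>, then \<open>N\<^sub>1 \<longrightarrow> 0\<close>,
  the constraint gives \<open>N\<^sub>1 N\<^sub>2 \<longrightarrow> -1/4\<close>, and \<open>N\<^sub>2 = N\<^sub>1 N\<^sub>2 / N\<^sub>1 \<longrightarrow> \<infinity>\<close>.\<close>

lemma deriv_neg_at_level_imp_stays_below:
  fixes f f' :: "real \<Rightarrow> real"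
  assumes f_deriv: "\<And>t. (f has_real_derivative f' t) (at t)"
    and deriv_neg: "\<And>t. a \<le> t \<Longrightarrow> c \<le> f t \<Longrightarrow> f' t < 0"
    and "f a < c" and "a \<le> b"
  shows "f b < c"
proof (rule ccontr)
  assume "\<not> f b < c"
  have "continuous_on {a..b} f"
    using f_deriv by (meson DERIV_continuous continuous_at_imp_continuous_on)
  then obtain u where u: "u \<in> {a..b}" "\<And>x. x \<in> {a..b} \<Longrightarrow> f x \<le> f u"
    using continuous_attains_sup[of "{a..b}" f] \<open>a \<le> b\<close> by auto
  have "c \<le> f u" using u(2)[of b] \<open>\<not> f b < c\<close> \<open>a \<le> b\<close> by simp
  with \<open>f a < c\<close> u(1) have "a < u"
    by (metis atLeastAtMost_iff linorder_not_le order_antisym_conv)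
  with \<open>c \<le> f u\<close> have "f' u < 0" by (intro deriv_neg) auto
  then obtain e where "e > 0" and e: "\<And>h. 0 < h \<Longrightarrow> h < e \<Longrightarrow> f u < f (u - h)"
    using DERIV_neg_dec_left[OF f_deriv] by blast
  define h where "h = min (e/2) (u - a)"
  have "f u < f (u - h)" using \<open>e > 0\<close> \<open>a < u\<close> by (intro e) (auto simp: h_def)
  moreover have "u - h \<in> {a..b}" using u(1) \<open>e > 0\<close> \<open>a < u\<close> by (auto simp: h_def)
  ultimately show False using u(2) by fastforce
qed

lemma decay_inequality_imp_tendsto_0:
  fixes f f' r :: "real \<Rightarrow> real"
  assumes f_deriv: "\<And>t. (f has_real_derivative f' t) (at t)"
    and decay: "\<And>t. T \<le> t \<Longrightarrow> f' t \<le> - k * f t + r t"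
    and nonneg: "\<And>t. T \<le> t \<Longrightarrow> 0 \<le> f t"
    and "0 < k" and r_lim: "(r \<longlongrightarrow> 0) at_top"
  shows "(f \<longlongrightarrow> 0) at_top"
  unfolding tendsto_iff dist_real_def
proof (intro allI impI)
  fix e :: real assume "0 < e"
  then have "\<forall>\<^sub>F t in at_top. r t < k * e / 2"
    using \<open>0 < k\<close> by (intro order_tendstoD(2)[OF r_lim]) simp
  then obtain T1 where T1: "T \<le> T1" "\<And>t. T1 \<le> t \<Longrightarrow> r t < k * e / 2"
    unfolding eventually_at_top_linorder by (metis max.cobounded1 max.boundedE)
  \<comment> \<open>From \<open>T1\<close> on, \<open>f\<close> falls at rate \<open>k e / 2\<close> while \<open>e \<le> f\<close>: it drops below \<open>e\<close> and stays there.\<close>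
  have descent: "f' t \<le> - (k * e / 2)" if "T1 \<le> t" "e \<le> f t" for t
  proof -
    have "k * e \<le> k * f t" using that(2) \<open>0 < k\<close> by simp
    moreover have "T \<le> t" "r t < k * e / 2" using T1 that by auto
    ultimately show ?thesis using decay[of t] by linarith
  qed
  have "\<exists>t1\<ge>T1. f t1 < e"
  proof (rule ccontr)
    assume "\<not> ?thesis"
    then have above: "e \<le> f t" if "T1 \<le> t" for t
      using that by (meson not_less)
    define t where "t = T1 + 2 * f T1 / (k * e)"
    have "T1 \<le> t"
      using nonneg[of T1] T1(1) \<open>0 < k\<close> \<open>0 < e\<close> by (simp add: t_def)
    have "f t + k * e / 2 * t \<le> f T1 + k * e / 2 * T1"
    proof (rule DERIV_nonpos_imp_nonincreasing[OF \<open>T1 \<le> t\<close>])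
      fix x assume "T1 \<le> x"
      then have "f' x + k * e / 2 \<le> 0" using descent above by fastforce
      then show "\<exists>y. ((\<lambda>t. f t + k * e / 2 * t) has_real_derivative y) (at x) \<and> y \<le> 0"
        by (auto intro!: exI[of _ "f' x + k * e / 2"] derivative_eq_intros f_deriv)
    qed
    moreover have "k * e / 2 * (t - T1) = f T1"
      using \<open>0 < k\<close> \<open>0 < e\<close> by (simp add: t_def)
    ultimately have "f t \<le> 0"
      unfolding right_diff_distrib by linarith
    with above[OF \<open>T1 \<le> t\<close>] \<open>0 < e\<close> show False by simp
  qed
  then obtain t1 where t1: "T1 \<le> t1" "f t1 < e" by blast
  have "f t < e" if "t1 \<le> t" for t
  proof (rule deriv_neg_at_level_imp_stays_below[OF f_deriv _ t1(2) that])
    fix x assume "t1 \<le> x" "e \<le> f x"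
    moreover have "0 < k * e / 2" using \<open>0 < k\<close> \<open>0 < e\<close> by simp
    ultimately show "f' x < 0" using descent[of x] t1(1) by force
  qed
  then show "\<forall>\<^sub>F t in at_top. \<bar>f t - 0\<bar> < e"
    unfolding eventually_at_top_linorder using nonneg T1(1) t1(1)
    by (intro exI[of _ t1]) auto
qed

text \<open>The locally rotationally symmetric reduction \<open>N\<^sub>3 = N\<^sub>2\<close>, \<open>\<Sigma>\<^sub>- = 0\<close> of the system;
  \<open>Sp\<close> stands for \<open>\<Sigma>\<^sub>+\<close>.\<close>

locale lrs_system =
  fixes Sp N1 N2 :: "real \<Rightarrow> real"
  assumes N1_deriv: "(N1 has_real_derivative (2 * Sp t ^ 2 - 4 * Sp t) * N1 t) (at t)"
    and N2_deriv: "(N2 has_real_derivative (2 * Sp t ^ 2 + 2 * Sp t) * N2 t) (at t)"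
    and Sp_deriv:
      "(Sp has_real_derivative (2 * Sp t ^ 2 - 2) * Sp t + 3 * N1 t ^ 2 - 3 * (N1 t * N2 t)) (at t)"
    and constraint: "Sp t ^ 2 + 3/4 * N1 t ^ 2 - 3 * (N1 t * N2 t) = 1"
begin

lemma N1_N2_eq: "N1 t * N2 t = (Sp t ^ 2 + 3/4 * N1 t ^ 2 - 1) / 3"
  using constraint[of t] by simp

lemma Sp_deriv_eliminate_N2:
  "(Sp has_real_derivative (1 - Sp t ^ 2) * (1 - 2 * Sp t) + 9/4 * N1 t ^ 2) (at t)"
proof -
  have "(2 * Sp t ^ 2 - 2) * Sp t + 3 * N1 t ^ 2 - 3 * (N1 t * N2 t)
      = (1 - Sp t ^ 2) * (1 - 2 * Sp t) + 9/4 * N1 t ^ 2"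
    unfolding N1_N2_eq by (simp add: field_simps power2_eq_square)
  then show ?thesis
    using Sp_deriv[of t] by simp
qed

lemma Sp_deriv_product_form:
  "(Sp has_real_derivative 3 * (N1 t * N2 t) * (2 * Sp t - 1) + 3/2 * N1 t ^ 2 * (2 - Sp t)) (at t)"
proof -
  have "(2 * Sp t ^ 2 - 2) * Sp t + 3 * N1 t ^ 2 - 3 * (N1 t * N2 t)
      = 3 * (N1 t * N2 t) * (2 * Sp t - 1) + 3/2 * N1 t ^ 2 * (2 - Sp t)
        + 2 * Sp t * (Sp t ^ 2 + 3/4 * N1 t ^ 2 - 3 * (N1 t * N2 t) - 1)"
    by (simp add: field_simps power2_eq_square)
  then show ?thesis
    using Sp_deriv[of t] constraint[of t] by simp
qed

lemma N1_sq_deriv: "((\<lambda>t. N1 t ^ 2) has_real_derivative 4 * Sp t * (Sp t - 2) * N1 t ^ 2) (at t)"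
  by (rule derivative_eq_intros N1_deriv refl)+ (simp add: algebra_simps power2_eq_square)

lemma N1_N2_deriv:
  "((\<lambda>t. N1 t * N2 t) has_real_derivative 2 * Sp t * (2 * Sp t - 1) * (N1 t * N2 t)) (at t)"
  by (rule derivative_eq_intros N1_deriv N2_deriv refl)+ (simp add: algebra_simps power2_eq_square)

end

locale lrs_bianchi_viii = lrs_system +
  assumes N1_neg: "N1 t < 0"
    and N2_pos: "0 < N2 t"
begin

lemma N1_N2_neg: "N1 t * N2 t < 0"
  using N1_neg N2_pos by (simp add: mult_neg_pos)

lemma abs_Sp_less_1: "\<bar>Sp t\<bar> < 1"
proof -
  have "Sp t ^ 2 < 1"
    using constraint[of t] N1_N2_neg[of t] zero_le_power2[of "N1 t"] by linarith
  then show ?thesis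
    by (simp add: abs_square_less_1)
qed

lemma Sp_deriv_pos:
  assumes "Sp t \<le> 1/2"
  shows "0 < (1 - Sp t ^ 2) * (1 - 2 * Sp t) + 9/4 * N1 t ^ 2"
proof -
  have "0 \<le> (1 - Sp t ^ 2) * (1 - 2 * Sp t)"
    using abs_Sp_less_1[of t] assms by (intro mult_nonneg_nonneg) (auto simp: abs_square_less_1 less_imp_le)
  moreover have "0 < N1 t ^ 2"
    using N1_neg[of t] by simp
  ultimately show ?thesis
    by linarith
qed

lemma N1_tendsto_0_if_Sp_ge:
  assumes "\<forall>\<^sub>F t in at_top. 1/4 \<le> Sp t"
  shows "(N1 \<longlongrightarrow> 0) at_top"
proof -
  obtain T where T: "\<And>t. T \<le> t \<Longrightarrow> 1/4 \<le> Sp t"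
    using assms by (auto simp: eventually_at_top_linorder)
  have "4 * Sp t * (Sp t - 2) * N1 t ^ 2 \<le> - (7/4) * N1 t ^ 2 + 0" if "T \<le> t" for t
  proof -
    have "4 * Sp t * (Sp t - 2) + 7/4 = 4 * (Sp t - 1/4) * (Sp t - 7/4)"
      by (simp add: field_simps)
    also have "\<dots> \<le> 0"
      using T[OF that] abs_Sp_less_1[of t] by (intro mult_nonneg_nonpos) auto
    finally have "(4 * Sp t * (Sp t - 2) + 7/4) * N1 t ^ 2 \<le> 0"
      by (simp add: mult_nonpos_nonneg)
    then show ?thesis
      by (simp add: algebra_simps)
  qed
  then have "((\<lambda>t. N1 t ^ 2) \<longlongrightarrow> 0) at_top"
    by (intro decay_inequality_imp_tendsto_0[OF N1_sq_deriv, of T "7/4"]) auto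
  then have "((\<lambda>t. - sqrt (N1 t ^ 2)) \<longlongrightarrow> - sqrt 0) at_top"
    by (intro tendsto_intros)
  moreover have "- sqrt (N1 t ^ 2) = N1 t" for t
    using N1_neg[of t] by simp
  ultimately show ?thesis
    by simp
qed

lemma Sp_stays_above_half:
  assumes "1/2 < Sp T" and "T \<le> t"
  shows "1/2 < Sp t"
proof -
  have "- Sp t < - (1/2)"
  proof (rule deriv_neg_at_level_imp_stays_below[where f = "\<lambda>t. - Sp t"
        and f' = "\<lambda>t. - ((1 - Sp t ^ 2) * (1 - 2 * Sp t) + 9/4 * N1 t ^ 2)"])
    show "((\<lambda>t. - Sp t) has_real_derivative - ((1 - Sp t ^ 2) * (1 - 2 * Sp t) + 9/4 * N1 t ^ 2)) (at t)"
      for t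
      by (intro derivative_intros Sp_deriv_eliminate_N2)
    show "- ((1 - Sp t ^ 2) * (1 - 2 * Sp t) + 9/4 * N1 t ^ 2) < 0" if "- (1/2) \<le> - Sp t" for t
      using Sp_deriv_pos[of t] that by simp
  qed (use assms in auto)
  then show ?thesis
    by simp
qed

lemma Sp_tendsto_half_if_le_half:
  assumes le_half: "\<And>t. Sp t \<le> 1/2"
  shows "(Sp \<longlongrightarrow> 1/2) at_top"
proof -
  have Sp_mono: "Sp 0 \<le> Sp t" if "0 \<le> t" for t
  proof (rule DERIV_nonneg_imp_nondecreasing[OF that])
    fix x
    show "\<exists>y. (Sp has_real_derivative y) (at x) \<and> 0 \<le> y"
      using Sp_deriv_eliminate_N2[of x] Sp_deriv_pos[OF le_half, of x] by (meson less_imp_le)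
  qed
  have deriv: "((\<lambda>t. 1 - 2 * Sp t) has_real_derivative
      -2 * ((1 - Sp t ^ 2) * (1 - 2 * Sp t) + 9/4 * N1 t ^ 2)) (at t)" for t
    by (rule derivative_eq_intros Sp_deriv_eliminate_N2 refl | simp)+
  have decay: "-2 * ((1 - Sp t ^ 2) * (1 - 2 * Sp t) + 9/4 * N1 t ^ 2)
      \<le> - (1 + Sp 0) * (1 - 2 * Sp t) + 0" if "0 \<le> t" for t
  proof -
    have "(1 + Sp 0) * 1 \<le> (1 + Sp t) * (2 * (1 - Sp t))"
      using Sp_mono[OF that] le_half[of t] abs_Sp_less_1[of 0] by (intro mult_mono) auto
    then have "1 + Sp 0 \<le> 2 * (1 - Sp t ^ 2)"
      by (simp add: algebra_simps power2_eq_square)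
    then have "(1 + Sp 0) * (1 - 2 * Sp t) \<le> 2 * (1 - Sp t ^ 2) * (1 - 2 * Sp t)"
      using le_half[of t] by (intro mult_right_mono) auto
    moreover have "-2 * ((1 - Sp t ^ 2) * (1 - 2 * Sp t) + 9/4 * N1 t ^ 2)
        = - (2 * (1 - Sp t ^ 2) * (1 - 2 * Sp t)) - 9/2 * N1 t ^ 2"
      by (simp add: algebra_simps)
    ultimately show ?thesis
      using zero_le_power2[of "N1 t"] by linarith
  qed
  have "0 \<le> 1 - 2 * Sp t" for t
    using le_half[of t] by simp
  moreover have "0 < 1 + Sp 0"
    using abs_Sp_less_1[of 0] by simp
  ultimately have "((\<lambda>t. 1 - 2 * Sp t) \<longlongrightarrow> 0) at_top"
    by (intro decay_inequality_imp_tendsto_0[OF deriv decay]) auto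
  then have "((\<lambda>t. 1/2 - 1/2 * (1 - 2 * Sp t)) \<longlongrightarrow> 1/2 - 1/2 * 0) at_top"
    by (intro tendsto_intros)
  moreover have "(\<lambda>t. 1/2 - 1/2 * (1 - 2 * Sp t)) = Sp"
    by (simp add: fun_eq_iff algebra_simps)
  ultimately show ?thesis
    by simp
qed

lemma Sp_tendsto_half_if_gt_half:
  assumes "1/2 < Sp T"
  shows "(Sp \<longlongrightarrow> 1/2) at_top"
proof -
  have above: "1/2 < Sp t" if "T \<le> t" for t
    using Sp_stays_above_half[OF assms that] .
  have "\<forall>\<^sub>F t in at_top. 1/4 \<le> Sp t"
  proof (rule eventually_at_top_linorderI)
    fix t assume "T \<le> t"
    then show "1/4 \<le> Sp t" using above[of t] by simp
  qed
  then have "(N1 \<longlongrightarrow> 0) at_top"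
    by (rule N1_tendsto_0_if_Sp_ge)
  then have "((\<lambda>t. 9 * N1 t ^ 2) \<longlongrightarrow> 9 * 0 ^ 2) at_top"
    by (intro tendsto_intros)
  then have N1_sq_lim: "((\<lambda>t. 9 * N1 t ^ 2) \<longlongrightarrow> 0) at_top"
    by simp
  have N1_N2_mono: "N1 t * N2 t \<le> N1 T * N2 T" if "T \<le> t" for t
  proof (rule DERIV_nonpos_imp_nonincreasing[OF that])
    fix x assume "T \<le> x"
    then have "2 * Sp x * (2 * Sp x - 1) * (N1 x * N2 x) \<le> 0"
      using above[of x] N1_N2_neg[of x] by (rule_tac mult_nonneg_nonpos) auto
    then show "\<exists>y. ((\<lambda>t. N1 t * N2 t) has_real_derivative y) (at x) \<and> y \<le> 0"
      using N1_N2_deriv by blast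
  qed
  have deriv: "((\<lambda>t. 2 * Sp t - 1) has_real_derivative
      2 * (3 * (N1 t * N2 t) * (2 * Sp t - 1) + 3/2 * N1 t ^ 2 * (2 - Sp t))) (at t)" for t
    by (rule derivative_eq_intros Sp_deriv_product_form refl | simp)+
  have decay: "2 * (3 * (N1 t * N2 t) * (2 * Sp t - 1) + 3/2 * N1 t ^ 2 * (2 - Sp t))
      \<le> - (- 6 * (N1 T * N2 T)) * (2 * Sp t - 1) + 9 * N1 t ^ 2" if "T \<le> t" for t
  proof -
    have "(N1 t * N2 t) * (2 * Sp t - 1) \<le> (N1 T * N2 T) * (2 * Sp t - 1)"
      using N1_N2_mono[OF that] above[OF that] by (intro mult_right_mono) auto
    moreover have "N1 t ^ 2 * (2 - Sp t) \<le> N1 t ^ 2 * 3"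
      using abs_Sp_less_1[of t] by (intro mult_left_mono) auto
    moreover have "2 * (3 * (N1 t * N2 t) * (2 * Sp t - 1) + 3/2 * N1 t ^ 2 * (2 - Sp t))
        = 6 * ((N1 t * N2 t) * (2 * Sp t - 1)) + 3 * (N1 t ^ 2 * (2 - Sp t))"
      "- (- 6 * (N1 T * N2 T)) * (2 * Sp t - 1) = 6 * ((N1 T * N2 T) * (2 * Sp t - 1))"
      by (simp_all add: field_simps)
    ultimately show ?thesis
      by linarith
  qed
  have "0 \<le> 2 * Sp t - 1" if "T \<le> t" for t
    using above[OF that] by simp
  moreover have "0 < - 6 * (N1 T * N2 T)"
    using N1_N2_neg[of T] by simp
  ultimately have "((\<lambda>t. 2 * Sp t - 1) \<longlongrightarrow> 0) at_top"
    using N1_sq_lim by (intro decay_inequality_imp_tendsto_0[OF deriv decay]) auto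
  then have "((\<lambda>t. 1/2 + 1/2 * (2 * Sp t - 1)) \<longlongrightarrow> 1/2 + 1/2 * 0) at_top"
    by (intro tendsto_intros)
  moreover have "(\<lambda>t. 1/2 + 1/2 * (2 * Sp t - 1)) = Sp"
    by (simp add: fun_eq_iff algebra_simps)
  ultimately show ?thesis
    by simp
qed

lemma Sp_tendsto_half: "(Sp \<longlongrightarrow> 1/2) at_top"
  using Sp_tendsto_half_if_gt_half Sp_tendsto_half_if_le_half by (meson not_le)

lemma N1_tendsto_0: "(N1 \<longlongrightarrow> 0) at_top"
  using order_tendstoD(1)[OF Sp_tendsto_half, of "1/4"]
  by (intro N1_tendsto_0_if_Sp_ge) (auto elim: eventually_mono)

lemma N1_N2_tendsto: "((\<lambda>t. N1 t * N2 t) \<longlongrightarrow> -1/4) at_top"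
proof -
  have "((\<lambda>t. (Sp t ^ 2 + 3/4 * N1 t ^ 2 - 1) / 3) \<longlongrightarrow> ((1/2) ^ 2 + 3/4 * 0 ^ 2 - 1) / 3) at_top"
    by (intro tendsto_intros Sp_tendsto_half N1_tendsto_0) simp
  then show ?thesis
    by (simp add: N1_N2_eq power2_eq_square)
qed

lemma N2_tendsto_at_top: "filterlim N2 at_top at_top"
proof -
  have "filterlim (\<lambda>t. - (N1 t * N2 t) * inverse (- N1 t)) at_top at_top"
  proof (rule filterlim_tendsto_pos_mult_at_top)
    show "((\<lambda>t. - (N1 t * N2 t)) \<longlongrightarrow> 1/4) at_top"
      using tendsto_minus[OF N1_N2_tendsto] by simp
    show "filterlim (\<lambda>t. inverse (- N1 t)) at_top at_top"
      using tendsto_minus[OF N1_tendsto_0] N1_neg by (intro filterlim_inverse_at_top) auto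
  qed simp
  moreover have "(\<lambda>t. - (N1 t * N2 t) * inverse (- N1 t)) = N2"
    using N1_neg by (auto simp: fun_eq_iff field_simps less_imp_neq)
  ultimately show ?thesis
    by simp
qed

end

lemma WH_solution_lrs_system:
  assumes "WH_solution N1 N2 N2 Sp (\<lambda>_. 0)"
  shows "lrs_system Sp N1 N2"
proof
  fix t
  have N1_deriv: "(N1 has_real_derivative ((wh_q (Sp t) 0 - 4 * Sp t) * N1 t)) (at t)"
    and N2_deriv: "(N2 has_real_derivative ((wh_q (Sp t) 0 + 2 * Sp t) * N2 t)) (at t)"
    and Sp_deriv:
      "(Sp has_real_derivative (- (2 - wh_q (Sp t) 0) * Sp t - 3 * wh_Sp (N1 t) (N2 t) (N2 t))) (at t)"
    and constraint: "Sp t ^ 2 + 3/4 * (N1 t ^ 2 + N2 t ^ 2 + N2 t ^ 2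
      - 2 * (N1 t * N2 t + N2 t * N2 t + N1 t * N2 t)) = 1"
    using assms unfolding WH_solution_def by auto
  have "- (2 - wh_q (Sp t) 0) * Sp t - 3 * wh_Sp (N1 t) (N2 t) (N2 t)
      = (2 * Sp t ^ 2 - 2) * Sp t + 3 * N1 t ^ 2 - 3 * (N1 t * N2 t)"
    by (simp add: wh_q_def wh_Sp_def algebra_simps power2_eq_square)
  with Sp_deriv show
    "(Sp has_real_derivative (2 * Sp t ^ 2 - 2) * Sp t + 3 * N1 t ^ 2 - 3 * (N1 t * N2 t)) (at t)"
    by simp
  show "(N1 has_real_derivative (2 * Sp t ^ 2 - 4 * Sp t) * N1 t) (at t)"
    and "(N2 has_real_derivative (2 * Sp t ^ 2 + 2 * Sp t) * N2 t) (at t)"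
    using N1_deriv N2_deriv by (simp_all add: wh_q_def)
  show "Sp t ^ 2 + 3/4 * N1 t ^ 2 - 3 * (N1 t * N2 t) = 1"
    using constraint by (simp add: algebra_simps power2_eq_square)
qed

theorem mainTheorem13:
  fixes N1 N2 N3 Sp Sm :: "real \<Rightarrow> real"
  assumes "WH_solution N1 N2 N3 Sp Sm"
    and "\<forall>t. N1 t < 0"
    and "\<forall>t. N2 t = N3 t \<and> N2 t > 0"
    and "\<forall>t. Sm t = 0"
  shows "(Sp \<longlongrightarrow> 1/2) at_top
    \<and> (N1 \<longlongrightarrow> 0) at_top
    \<and> filterlim N2 at_top at_top
    \<and> ((\<lambda>t. N1 t * N2 t) \<longlongrightarrow> -1/4) at_top"
proof -
  have "N3 = N2" and "Sm = (\<lambda>_. 0)"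
    using assms(3,4) by auto
  with assms(1) interpret lrs_system Sp N1 N2
    by (intro WH_solution_lrs_system) simp
  interpret lrs_bianchi_viii Sp N1 N2
    by unfold_locales (meson assms(2,3))+
  show ?thesis
    using Sp_tendsto_half N1_tendsto_0 N2_tendsto_at_top N1_N2_tendsto by blast
qed

end
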